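(* As formal power series in $Q$ with coefficients in $\mathbb{Z}[T]$, $$\sum_{k=1}^{\infty}\frac{F(k)}{\prod_{i=1}^{k}(1-Q^iT^{2(i-1)})^2}=\frac{1}{\prod_{i=1}^{\infty}(1-Q^iT^{2(i-1)})},$$ where $F(1)=Q^2T^2-Q+1$ and, for $k\ge2$, $F(k)$ is the sum of the two entries of $V_k=M_{k,k}M_{k,k-1}\cdots M_{k,2}V_{k,1}$ with $$V_{k,1}=\begin{bmatrix}Q^{2k}T^{4(k-1)}(T^2-1)\\ Q^kT^{2(k-1)}\end{bmatrix},\quad M_{k,s}=\begin{bmatrix}Q^{2(k-s+1)}T^{4(k-s)}(T^2-1)+(1-Q^{k-s+1}T^{2(k-s)})^2 & Q^{k-s+1}T^{2(k-s)}(T^2-1)\\ Q^{k-s+1}T^{2(k-s)} & Q^{2(k-s+1)}T^{4(k-s)}T^2\end{bmatrix}\ (2\le s\le k).$$ *)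

theory Defs
  imports "HOL-Analysis.Analysis" "HOL-Computational_Algebra.Computational_Algebra"
begin

type_synonym ps = "int poly fps"  \<comment> \<open>formal power series in Q over Z[T]\<close>

definition QQ :: ps where "QQ = fps_X"
definition TT :: ps where "TT = fps_const [:0, 1:]"

text \<open>Reciprocal of a power series with constant term 1 (the unique right inverse).\<close>
definition recip :: "ps \<Rightarrow> ps" where "recip g = fps_right_inverse g 1"

definition qt :: "nat \<Rightarrow> ps" where "qt i = QQ ^ i * TT ^ (2 * (i - 1))"

text \<open>2x2 matrices ((m11,m12),(m21,m22)) acting on column vectors (v1,v2).\<close>
definition mat_vec :: "(ps \<times> ps) \<times> (ps \<times> ps) \<Rightarrow> ps \<times> ps \<Rightarrow> ps \<times> ps" where
  "mat_vec M v = (fst (fst M) * fst v + snd (fst M) * snd v,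
                  fst (snd M) * fst v + snd (snd M) * snd v)"

definition Vk1 :: "nat \<Rightarrow> ps \<times> ps" where
  "Vk1 k = (QQ ^ (2 * k) * TT ^ (4 * (k - 1)) * (TT ^ 2 - 1), QQ ^ k * TT ^ (2 * (k - 1)))"

definition Mks :: "nat \<Rightarrow> nat \<Rightarrow> (ps \<times> ps) \<times> (ps \<times> ps)" where
  "Mks k s =
    ((QQ ^ (2 * (k - s + 1)) * TT ^ (4 * (k - s)) * (TT ^ 2 - 1)
        + (1 - QQ ^ (k - s + 1) * TT ^ (2 * (k - s))) ^ 2,
      QQ ^ (k - s + 1) * TT ^ (2 * (k - s)) * (TT ^ 2 - 1)),
     (QQ ^ (k - s + 1) * TT ^ (2 * (k - s)),
      QQ ^ (2 * (k - s + 1)) * TT ^ (4 * (k - s)) * TT ^ 2))"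

text \<open>Wk k n = M_{k,n+1} ... M_{k,2} V_{k,1}\<close>
primrec Wk :: "nat \<Rightarrow> nat \<Rightarrow> ps \<times> ps" where
  "Wk k 0 = Vk1 k"
| "Wk k (Suc n) = mat_vec (Mks k (n + 2)) (Wk k n)"

definition Vk :: "nat \<Rightarrow> ps \<times> ps" where "Vk k = Wk k (k - 1)"

definition FF :: "nat \<Rightarrow> ps" where
  "FF k = (if k = 1 then QQ ^ 2 * TT ^ 2 - QQ + 1 else fst (Vk k) + snd (Vk k))"

end

theory Submission
  imports Defs
begin

(*
  Put q = Q T^2, so that x_i = Q^i T^(2(i-1)) equals Q q^(i-1) and the partial products of the
  right-hand side are the q-Pochhammer symbols (Q;q)_n (qpoch Q q n).  Writing M_m for M_{k,s} with
  m = k - s + 1, the row vector (1,1) M_1 ... M_n equals (A_n, B_n) (rowA n, rowB n), where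

    A_n = sum_j (-Q)^j q^(j choose 2) C(n,j),   B_n = sum_j (-Q)^j q^(j choose 2) C(n,j) q^(n-j),
    C(n,j) = (q;q)_n^2 / ((q;q)_j (q;q)_(n-j)^2)   (sqbin q n j);

  this follows from two Pascal-type recurrences for C(n,j).  As V_{k,1} is the first column of
  M_k minus ((1 - x_k)^2, 0), we get F(k+1) = A_(k+1) - (1 - x_(k+1))^2 A_k for k >= 1, and
  F(1) = A_1, so the n-th partial sum of the series telescopes to A_n / (Q;q)_n^2.  Finally
  C(n,j) agrees with the Gaussian binomial modulo Q^(n+1-j), so Rothe's q-binomial theorem gives
  A_n = (Q;q)_n modulo Q^(n+1), and A_n / (Q;q)_n^2 tends Q-adically to 1 / (Q;q)_infinity.
*)

section \<open>q-Pochhammer symbols and Gaussian binomial coefficients\<close>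

definition qpoch :: "'a::comm_ring_1 \<Rightarrow> 'a \<Rightarrow> nat \<Rightarrow> 'a" where
  "qpoch z q n = (\<Prod>i<n. 1 - z * q ^ i)"

lemma qpoch_0 [simp]: "qpoch z q 0 = 1"
  by (simp add: qpoch_def)

lemma qpoch_Suc [simp]: "qpoch z q (Suc n) = qpoch z q n * (1 - z * q ^ n)"
  by (simp add: qpoch_def)

lemma qpoch_add: "qpoch z q (m + n) = qpoch z q m * qpoch (z * q ^ m) q n"
  by (induction n) (simp_all add: power_add mult.assoc)

lemma qpoch_q_q_nonzero:
  fixes q :: "'a::idom"
  assumes "\<And>i. q ^ Suc i \<noteq> 1"
  shows "qpoch q q n \<noteq> 0"
  using assms by (simp add: qpoch_def flip: power_Suc)

lemma dvd_qpoch_minus_1: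
  assumes "d dvd z"
  shows "d dvd qpoch z q n - 1"
proof (induction n)
  case (Suc n)
  have "qpoch z q (Suc n) - 1 = (qpoch z q n - 1) - qpoch z q n * q ^ n * z"
    by (simp add: algebra_simps)
  then show ?case
    by (simp only: dvd_diff[OF Suc dvd_mult[OF assms]])
qed simp

lemma qpoch_congruent:
  assumes "d dvd z" and "d dvd q" and "n \<le> m"
  shows "d ^ Suc n dvd qpoch z q m - qpoch z q n"
proof -
  have "qpoch z q m - qpoch z q n = qpoch z q n * (qpoch (z * q ^ n) q (m - n) - 1)"
    using qpoch_add[of z q n "m - n"] assms(3) by (simp add: algebra_simps)
  moreover have "d ^ Suc n dvd z * q ^ n"
    using assms(1,2) by (simp add: mult_dvd_mono dvd_power_same)
  ultimately show ?thesis
    by (simp add: dvd_qpoch_minus_1)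
qed

fun qbin :: "'a::comm_ring_1 \<Rightarrow> nat \<Rightarrow> nat \<Rightarrow> 'a" where
  "qbin q n 0 = 1"
| "qbin q 0 (Suc k) = 0"
| "qbin q (Suc n) (Suc k) = qbin q n (Suc k) + q ^ (n - k) * qbin q n k"

lemma qbin_eq_0: "n < k \<Longrightarrow> qbin q n k = 0"
proof (induction n arbitrary: k)
  case 0 then show ?case by (cases k) auto
next
  case (Suc n) then show ?case by (cases k) auto
qed

lemma qbin_qpoch:
  "k \<le> n \<Longrightarrow> qbin q n k * qpoch q q k * qpoch q q (n - k) = qpoch q q n"
proof (induction n arbitrary: k)
  case (Suc n)
  show ?case
  proof (cases k)
    case (Suc j)
    with Suc.prems have j: "j \<le> n" by simp
    have lower: "qbin q n j * qpoch q q j * qpoch q q (n - j) = qpoch q q n"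
      using Suc.IH j by simp
    have upper: "qbin q n (Suc j) * qpoch q q (Suc j) * qpoch q q (n - j)
        = qpoch q q n * (1 - q ^ (n - j))"
    proof (cases "j = n")
      case False
      then have "n - j = Suc (n - Suc j)" using j by simp
      then have "qbin q n (Suc j) * qpoch q q (Suc j) * qpoch q q (n - j)
          = qbin q n (Suc j) * qpoch q q (Suc j) * qpoch q q (n - Suc j) * (1 - q ^ (n - j))"
        by (simp add: mult.assoc mult.commute[of q])
      with Suc.IH[of "Suc j"] False j show ?thesis by simp
    qed (simp add: qbin_eq_0)
    have "qbin q (Suc n) k * qpoch q q k * qpoch q q (Suc n - k)
        = qbin q n (Suc j) * qpoch q q (Suc j) * qpoch q q (n - j)
          + q ^ (n - j) * (1 - q * q ^ j) * (qbin q n j * qpoch q q j * qpoch q q (n - j))"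
      using Suc by (simp add: algebra_simps)
    also have "\<dots> = qpoch q q n * (1 - q ^ (n - j) * q ^ Suc j)"
      unfolding upper lower by (simp add: algebra_simps)
    also have "q ^ (n - j) * q ^ Suc j = q ^ Suc n"
      using j by (simp del: power_Suc flip: power_add)
    finally show ?thesis
      by simp
  qed simp
qed simp

definition rothe_coeff :: "'a::comm_ring_1 \<Rightarrow> 'a \<Rightarrow> nat \<Rightarrow> 'a" where
  "rothe_coeff z q j = (- z) ^ j * q ^ (j choose 2)"

lemma rothe_coeff_0 [simp]: "rothe_coeff z q 0 = 1"
  by (simp add: rothe_coeff_def numeral_2_eq_2)

lemma rothe_coeff_Suc: "rothe_coeff z q (Suc j) = - (z * q ^ j) * rothe_coeff z q j"
proof -
  have "Suc j choose 2 = j + (j choose 2)"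
    by (simp add: numeral_2_eq_2)
  then show ?thesis
    by (simp add: rothe_coeff_def power_add)
qed

lemma rothe_coeff_Suc_mult:
  assumes "k \<le> n"
  shows "rothe_coeff z q (Suc k) * q ^ (n - k) = - (z * q ^ n) * rothe_coeff z q k"
proof -
  have "rothe_coeff z q (Suc k) * q ^ (n - k) = - (z * (q ^ k * q ^ (n - k))) * rothe_coeff z q k"
    by (simp add: rothe_coeff_Suc mult_ac)
  also have "q ^ k * q ^ (n - k) = q ^ n"
    using assms by (simp flip: power_add)
  finally show ?thesis .
qed

theorem qpoch_eq_sum_qbin: "qpoch z q n = (\<Sum>j\<le>n. rothe_coeff z q j * qbin q n j)"
proof (induction n)
  case (Suc n)
  have "(\<Sum>j\<le>n. rothe_coeff z q (Suc j) * (q ^ (n - j) * qbin q n j))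
      = (\<Sum>j\<le>n. - (z * q ^ n) * (rothe_coeff z q j * qbin q n j))"
    by (intro sum.cong) (simp_all add: rothe_coeff_Suc_mult flip: mult.assoc)
  also have "\<dots> = - (z * q ^ n) * qpoch z q n"
    by (simp add: Suc sum_distrib_left)
  finally have high: "(\<Sum>j\<le>n. rothe_coeff z q (Suc j) * (q ^ (n - j) * qbin q n j))
      = - (z * q ^ n) * qpoch z q n" .
  have "1 + (\<Sum>j\<le>n. rothe_coeff z q (Suc j) * qbin q n (Suc j))
      = (\<Sum>j\<le>Suc n. rothe_coeff z q j * qbin q n j)"
    by (simp only: sum.atMost_Suc_shift) simp
  also have "\<dots> = qpoch z q n"
    by (simp add: Suc qbin_eq_0)
  finally have low: "1 + (\<Sum>j\<le>n. rothe_coeff z q (Suc j) * qbin q n (Suc j)) = qpoch z q n" .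
  have "(\<Sum>j\<le>Suc n. rothe_coeff z q j * qbin q (Suc n) j)
      = 1 + (\<Sum>j\<le>n. rothe_coeff z q (Suc j) * qbin q n (Suc j))
          + (\<Sum>j\<le>n. rothe_coeff z q (Suc j) * (q ^ (n - j) * qbin q n j))"
    by (simp only: sum.atMost_Suc_shift qbin.simps distrib_left sum.distrib) simp
  also have "\<dots> = qpoch z q (Suc n)"
    unfolding low high by (simp add: algebra_simps)
  finally show ?case ..
qed simp

definition sqbin :: "'a::comm_ring_1 \<Rightarrow> nat \<Rightarrow> nat \<Rightarrow> 'a" where
  "sqbin q n k = qbin q n k * qpoch (q ^ Suc (n - k)) q k"

lemma sqbin_0 [simp]: "sqbin q n 0 = 1"
  by (simp add: sqbin_def)

lemma sqbin_eq_0: "n < k \<Longrightarrow> sqbin q n k = 0"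
  by (simp add: sqbin_def qbin_eq_0)

lemma sqbin_qpoch:
  assumes "k \<le> n"
  shows "sqbin q n k * qpoch q q k * qpoch q q (n - k) ^ 2 = qpoch q q n ^ 2"
proof -
  have top: "qpoch (q ^ Suc (n - k)) q k * qpoch q q (n - k) = qpoch q q n"
    using qpoch_add[of q q "n - k" k] assms by (simp add: mult.commute)
  have "sqbin q n k * qpoch q q k * qpoch q q (n - k) ^ 2
      = (qbin q n k * qpoch q q k * qpoch q q (n - k))
        * (qpoch (q ^ Suc (n - k)) q k * qpoch q q (n - k))"
    by (simp add: sqbin_def power2_eq_square mult_ac)
  then show ?thesis
    by (simp only: qbin_qpoch[OF assms] top power2_eq_square)
qed

lemma sqbin_cleared:
  fixes q :: "'a::comm_ring_1"
  assumes k: "k \<le> n"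
  defines "K \<equiv> qpoch q q (Suc k) * qpoch q q (n - k) ^ 2" and "P \<equiv> qpoch q q n ^ 2"
  shows "sqbin q n (Suc k) * K = P * (1 - q ^ (n - k)) ^ 2"
    and "sqbin q n k * K = P * (1 - q ^ Suc k)"
    and "sqbin q (Suc n) (Suc k) * K = P * (1 - q ^ (n - k) * q ^ Suc k) ^ 2"
proof -
  show "sqbin q n (Suc k) * K = P * (1 - q ^ (n - k)) ^ 2"
  proof (cases "k = n")
    case False
    then have "n - k = Suc (n - Suc k)"
      using k by simp
    then have "qpoch q q (n - k) = qpoch q q (n - Suc k) * (1 - q ^ (n - k))"
      by simp
    then have "sqbin q n (Suc k) * K
        = (sqbin q n (Suc k) * qpoch q q (Suc k) * qpoch q q (n - Suc k) ^ 2) * (1 - q ^ (n - k)) ^ 2"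
      by (simp add: K_def power_mult_distrib mult_ac)
    then show ?thesis
      using sqbin_qpoch[of "Suc k" n q] False k by (simp add: P_def)
  qed (simp add: sqbin_eq_0)
  have "sqbin q n k * K = (sqbin q n k * qpoch q q k * qpoch q q (n - k) ^ 2) * (1 - q ^ Suc k)"
    by (simp add: K_def mult_ac)
  then show "sqbin q n k * K = P * (1 - q ^ Suc k)"
    by (simp only: sqbin_qpoch[OF k] P_def)
  have "sqbin q (Suc n) (Suc k) * K = qpoch q q (Suc n) ^ 2"
    using sqbin_qpoch[of "Suc k" "Suc n" q] k by (simp add: K_def mult.assoc)
  also have "\<dots> = P * (1 - q ^ Suc n) ^ 2"
    by (simp add: P_def power_mult_distrib)
  also have "q ^ Suc n = q ^ (n - k) * q ^ Suc k"
    using k by (simp del: power_Suc flip: power_add)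
  finally show "sqbin q (Suc n) (Suc k) * K = P * (1 - q ^ (n - k) * q ^ Suc k) ^ 2" .
qed

text \<open>Multiplied by the nonzero factor \<open>K\<close>, both recurrences become polynomial identities
  in \<open>A = q ^ (n - k)\<close> and \<open>B = q ^ Suc k\<close>.\<close>

lemma sqbin_Suc_Suc:
  fixes q :: "'a::idom"
  assumes q: "\<And>i. q ^ Suc i \<noteq> 1" and k: "k \<le> n"
  shows "sqbin q (Suc n) (Suc k)
      = sqbin q n (Suc k) + q ^ (n - k) * (2 - q ^ Suc n - q ^ (n - k)) * sqbin q n k"
    and "sqbin q (Suc n) (Suc k)
      = q ^ Suc k * sqbin q n (Suc k) + (1 - q ^ (2 * n + 1 - k)) * sqbin q n k"
proof -
  define K where "K = qpoch q q (Suc k) * qpoch q q (n - k) ^ 2"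
  define P where "P = qpoch q q n ^ 2"
  define A where "A = q ^ (n - k)"
  define B where "B = q ^ Suc k"
  note cleared = sqbin_cleared[OF k, of q, folded K_def P_def A_def B_def]
  have K: "K \<noteq> 0"
    using qpoch_q_q_nonzero[OF q] by (simp add: K_def del: qpoch_Suc)
  have "q ^ Suc n = A * B"
    using k by (simp add: A_def B_def del: power_Suc flip: power_add)
  then have "(sqbin q n (Suc k) + q ^ (n - k) * (2 - q ^ Suc n - q ^ (n - k)) * sqbin q n k) * K
      = sqbin q n (Suc k) * K + A * (2 - A * B - A) * (sqbin q n k * K)"
    by (simp add: A_def algebra_simps)
  also have "\<dots> = sqbin q (Suc n) (Suc k) * K"
    unfolding cleared by (simp add: algebra_simps power2_eq_square)
  finally show "sqbin q (Suc n) (Suc k)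
      = sqbin q n (Suc k) + q ^ (n - k) * (2 - q ^ Suc n - q ^ (n - k)) * sqbin q n k"
    using K by simp
  have "2 * n + 1 - k = (n - k) + (n - k) + Suc k"
    using k by simp
  then have "q ^ (2 * n + 1 - k) = A * A * B"
    by (simp only: A_def B_def power_add)
  then have "(q ^ Suc k * sqbin q n (Suc k) + (1 - q ^ (2 * n + 1 - k)) * sqbin q n k) * K
      = B * (sqbin q n (Suc k) * K) + (1 - A * A * B) * (sqbin q n k * K)"
    by (simp add: B_def algebra_simps)
  also have "\<dots> = sqbin q (Suc n) (Suc k) * K"
    unfolding cleared by (simp add: algebra_simps power2_eq_square)
  finally show "sqbin q (Suc n) (Suc k)
      = q ^ Suc k * sqbin q n (Suc k) + (1 - q ^ (2 * n + 1 - k)) * sqbin q n k"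
    using K by simp
qed

lemma rothe_coeff_dvd: "d dvd z \<Longrightarrow> d ^ j dvd rothe_coeff z q j"
  unfolding rothe_coeff_def by (intro dvd_mult2) (simp add: dvd_power_same)

lemma sqbin_congruent: "d dvd q \<Longrightarrow> d ^ Suc (n - k) dvd sqbin q n k - qbin q n k"
  unfolding sqbin_def
  using dvd_qpoch_minus_1[OF dvd_power_same, of d q "Suc (n - k)" q k]
  by (metis dvd_mult mult.right_neutral right_diff_distrib)

lemma sum_sqbin_congruent:
  assumes "d dvd z" and "d dvd q"
  shows "d ^ Suc n dvd (\<Sum>j\<le>n. rothe_coeff z q j * sqbin q n j) - qpoch z q n"
proof -
  have "(\<Sum>j\<le>n. rothe_coeff z q j * sqbin q n j) - qpoch z q n
      = (\<Sum>j\<le>n. rothe_coeff z q j * (sqbin q n j - qbin q n j))"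
    by (simp add: qpoch_eq_sum_qbin right_diff_distrib sum_subtractf)
  also have "d ^ Suc n dvd \<dots>"
  proof (rule dvd_sum)
    fix j assume "j \<in> {..n}"
    then have "d ^ Suc n = d ^ j * d ^ Suc (n - j)"
      by (simp del: power_Suc flip: power_add)
    then show "d ^ Suc n dvd rothe_coeff z q j * (sqbin q n j - qbin q n j)"
      using mult_dvd_mono[OF rothe_coeff_dvd sqbin_congruent] assms by metis
  qed
  finally show ?thesis .
qed

section \<open>X-adic limits of formal power series\<close>

lemma fps_nth_eq_if_X_power_dvd:
  fixes f g :: "'a::comm_ring_1 fps"
  assumes "fps_X ^ m dvd f - g" and "i < m"
  shows "f $ i = g $ i"
proof -
  obtain h where "f - g = fps_X ^ m * h"
    using assms(1) by (rule dvdE)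
  then have "(f - g) $ i = 0"
    using assms(2) by (simp add: fps_X_power_mult_nth)
  then show ?thesis
    by simp
qed

lemma fps_X_power_dvdI:
  fixes f :: "'a::comm_ring_1 fps"
  assumes "\<And>i. i < m \<Longrightarrow> f $ i = 0"
  shows "fps_X ^ m dvd f"
proof
  show "f = fps_X ^ m * fps_shift m f"
    by (rule fps_ext) (simp add: fps_X_power_mult_nth assms)
qed

lemma X_adic_limit:
  fixes f :: "nat \<Rightarrow> 'a::comm_ring_1 fps"
  assumes "\<And>n m. n \<le> m \<Longrightarrow> fps_X ^ Suc n dvd f m - f n"
  shows "fps_X ^ Suc n dvd Abs_fps (\<lambda>i. f i $ i) - f n"
proof (rule fps_X_power_dvdI)
  fix i assume "i < Suc n"
  then have "f n $ i = f i $ i"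
    using fps_nth_eq_if_X_power_dvd[OF assms[of i n]] by simp
  then show "(Abs_fps (\<lambda>i. f i $ i) - f n) $ i = 0"
    by simp
qed

lemma X_adic_tendsto:
  fixes f :: "nat \<Rightarrow> 'a::comm_ring_1 fps"
  assumes "\<And>n. N \<le> n \<Longrightarrow> fps_X ^ n dvd f n - L"
  shows "f \<longlonglongrightarrow> L"
proof (rule tendsto_fpsI)
  fix i
  show "\<forall>\<^sub>F n in sequentially. f n $ i = L $ i"
    unfolding eventually_sequentially
    using assms by (intro exI[of _ "max N (Suc i)"] allI impI fps_nth_eq_if_X_power_dvd) auto
qed

lemma mult_recip: "f $ 0 = 1 \<Longrightarrow> f * recip f = 1"
  unfolding recip_def by (rule fps_right_inverse) simp

lemma recip_eqI:
  fixes f g :: ps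
  assumes "f $ 0 = 1" and "f * g = 1"
  shows "recip f = g"
proof -
  have "recip f = g * (f * recip f)"
    using assms(2) by (simp add: mult.commute mult.left_commute)
  then show ?thesis
    using mult_recip[OF assms(1)] by simp
qed

lemma recip_mult_right:
  fixes f g :: ps
  assumes "f $ 0 = 1" and "g $ 0 = 1"
  shows "recip f = g * recip (f * g)"
proof (rule recip_eqI[OF assms(1)])
  have "(f * g) $ 0 = 1"
    using assms by simp
  from mult_recip[OF this] show "f * (g * recip (f * g)) = 1"
    by (simp add: mult.assoc)
qed

lemma dvd_mult_recip_square_minus_recip:
  fixes p P a d :: ps
  assumes p: "p $ 0 = 1" and P: "P $ 0 = 1" and "d dvd a - p" and "d dvd P - p"
  shows "d dvd a * recip (p ^ 2) - recip P"
proof -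
  have p2: "(p ^ 2) $ 0 = 1"
    using p by (simp add: fps_nth_power_0)
  have "a * recip (p ^ 2) - recip P
      = recip (p ^ 2) * recip P * ((a - p) * P + p * (P - p))"
    using mult_recip[OF p2] mult_recip[OF P] by (simp add: algebra_simps power2_eq_square)
  then show ?thesis
    using assms by (simp add: dvd_add dvd_mult)
qed

section \<open>The row vectors (1,1) M_1 ... M_n\<close>

definition qq :: ps where "qq = QQ * TT ^ 2"

lemma qt_Suc: "qt (Suc i) = QQ * qq ^ i"
  by (simp add: qt_def qq_def power_mult_distrib power_mult)

lemma qt_Suc_mult_TT: "qt (Suc i) * TT ^ 2 = qq ^ Suc i"
  by (simp add: qt_Suc qq_def mult_ac)

lemma prod_one_minus_qt: "(\<Prod>i=1..n. 1 - qt i) = qpoch QQ qq n"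
  by (induction n) (simp_all add: atLeastAtMostSuc_conv qt_Suc mult.commute)

lemma fps_X_dvd_QQ: "fps_X dvd QQ"
  by (simp add: QQ_def)

lemma fps_X_dvd_qq: "fps_X dvd qq"
  by (simp add: qq_def QQ_def)

lemma qq_power_ne_1: "qq ^ Suc i \<noteq> 1"
proof
  assume "qq ^ Suc i = 1"
  then have "(qq ^ Suc i) $ 0 = 1"
    by simp
  then show False
    by (simp add: qq_def QQ_def fps_nth_power_0)
qed

lemma QQ_nth_0 [simp]: "QQ $ 0 = 0"
  by (simp add: QQ_def)

lemma qpoch_QQ_nth_0: "qpoch QQ qq n $ 0 = 1"
  by (induction n) simp_all

definition rowA :: "nat \<Rightarrow> ps" where
  "rowA n = (\<Sum>j\<le>n. rothe_coeff QQ qq j * sqbin qq n j)"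

definition rowB :: "nat \<Rightarrow> ps" where
  "rowB n = (\<Sum>j\<le>n. rothe_coeff QQ qq j * sqbin qq n j * qq ^ (n - j))"

lemma rothe_coeff_Suc_mult_qq:
  "k \<le> n \<Longrightarrow> rothe_coeff QQ qq (Suc k) * qq ^ (n - k) = - qt (Suc n) * rothe_coeff QQ qq k"
  by (simp add: rothe_coeff_Suc_mult qt_Suc)

lemma rowA_eq_1_plus: "rowA n = 1 + (\<Sum>j\<le>n. rothe_coeff QQ qq (Suc j) * sqbin qq n (Suc j))"
proof -
  have "rowA n = (\<Sum>j\<le>Suc n. rothe_coeff QQ qq j * sqbin qq n j)"
    by (simp add: rowA_def sqbin_eq_0)
  then show ?thesis
    by (simp only: sum.atMost_Suc_shift) simp
qed

lemma rowA_Suc: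
  "rowA (Suc n) = rowA n * (1 - 2 * qt (Suc n) + qt (Suc n) * qq ^ Suc n) + rowB n * qt (Suc n)"
proof -
  let ?r = "rothe_coeff QQ qq" and ?x = "qt (Suc n)" and ?Q = "qq ^ Suc n"
  have "?r (Suc j) * sqbin qq (Suc n) (Suc j)
      = ?r (Suc j) * sqbin qq n (Suc j) - ?x * (2 - ?Q) * (?r j * sqbin qq n j)
        + ?x * (?r j * sqbin qq n j * qq ^ (n - j))" if "j \<in> {..n}" for j
  proof -
    from that have j: "j \<le> n" by simp
    have "?r (Suc j) * sqbin qq (Suc n) (Suc j)
        = ?r (Suc j) * sqbin qq n (Suc j)
          + (?r (Suc j) * qq ^ (n - j)) * (2 - ?Q - qq ^ (n - j)) * sqbin qq n j"
      by (simp add: sqbin_Suc_Suc(1)[OF qq_power_ne_1 j] algebra_simps)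
    also have "\<dots> = ?r (Suc j) * sqbin qq n (Suc j)
          + (- ?x * ?r j) * (2 - ?Q - qq ^ (n - j)) * sqbin qq n j"
      by (simp only: rothe_coeff_Suc_mult_qq[OF j])
    finally show ?thesis
      by (simp add: algebra_simps)
  qed
  then have "(\<Sum>j\<le>n. ?r (Suc j) * sqbin qq (Suc n) (Suc j))
      = (\<Sum>j\<le>n. ?r (Suc j) * sqbin qq n (Suc j)) - ?x * (2 - ?Q) * rowA n + ?x * rowB n"
    unfolding rowA_def rowB_def
    by (simp only: sum.distrib sum_subtractf sum_distrib_left cong: sum.cong)
  moreover have "rowA (Suc n) = 1 + (\<Sum>j\<le>n. ?r (Suc j) * sqbin qq (Suc n) (Suc j))"
    unfolding rowA_def by (simp only: sum.atMost_Suc_shift) simp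
  ultimately show ?thesis
    using rowA_eq_1_plus[of n] by (simp add: algebra_simps)
qed

lemma rowB_Suc:
  "rowB (Suc n) = rowA n * (qq ^ Suc n - qt (Suc n)) + rowB n * (qt (Suc n) * qq ^ Suc n)"
proof -
  let ?r = "rothe_coeff QQ qq" and ?x = "qt (Suc n)" and ?Q = "qq ^ Suc n"
  have "?r (Suc j) * sqbin qq (Suc n) (Suc j) * qq ^ (n - j)
      = ?Q * (?r (Suc j) * sqbin qq n (Suc j)) - ?x * (?r j * sqbin qq n j)
        + ?x * ?Q * (?r j * sqbin qq n j * qq ^ (n - j))" if "j \<in> {..n}" for j
  proof -
    from that have j: "j \<le> n" by simp
    have Q: "qq ^ Suc j * qq ^ (n - j) = ?Q"
      using j by (simp del: power_Suc flip: power_add)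
    have "2 * n + 1 - j = Suc n + (n - j)"
      using j by simp
    then have Q': "qq ^ (2 * n + 1 - j) = ?Q * qq ^ (n - j)"
      by (simp only: power_add)
    have "?r (Suc j) * sqbin qq (Suc n) (Suc j) * qq ^ (n - j)
        = (qq ^ Suc j * qq ^ (n - j)) * (?r (Suc j) * sqbin qq n (Suc j))
          + (?r (Suc j) * qq ^ (n - j)) * (1 - qq ^ (2 * n + 1 - j)) * sqbin qq n j"
      by (simp add: sqbin_Suc_Suc(2)[OF qq_power_ne_1 j] algebra_simps)
    also have "\<dots> = ?Q * (?r (Suc j) * sqbin qq n (Suc j))
          + (- ?x * ?r j) * (1 - ?Q * qq ^ (n - j)) * sqbin qq n j"
      by (simp only: Q Q' rothe_coeff_Suc_mult_qq[OF j])
    finally show ?thesis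
      by (simp add: algebra_simps)
  qed
  then have "(\<Sum>j\<le>n. ?r (Suc j) * sqbin qq (Suc n) (Suc j) * qq ^ (n - j))
      = ?Q * (\<Sum>j\<le>n. ?r (Suc j) * sqbin qq n (Suc j)) - ?x * rowA n + ?x * ?Q * rowB n"
    unfolding rowA_def rowB_def
    by (simp only: sum.distrib sum_subtractf sum_distrib_left cong: sum.cong)
  moreover have "rowB (Suc n) = ?Q + (\<Sum>j\<le>n. ?r (Suc j) * sqbin qq (Suc n) (Suc j) * qq ^ (n - j))"
    unfolding rowB_def by (simp only: sum.atMost_Suc_shift) simp
  ultimately show ?thesis
    using rowA_eq_1_plus[of n] by (simp add: algebra_simps)
qed

definition step_matrix :: "nat \<Rightarrow> (ps \<times> ps) \<times> (ps \<times> ps)" where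
  "step_matrix m =
    ((qt m ^ 2 * (TT ^ 2 - 1) + (1 - qt m) ^ 2, qt m * (TT ^ 2 - 1)),
     (qt m, qt m ^ 2 * TT ^ 2))"

lemma qt_power2: "qt m ^ 2 = QQ ^ (2 * m) * TT ^ (4 * (m - 1))"
  by (simp add: qt_def power_mult_distrib flip: power_mult) (simp add: mult.commute)

lemma Mks_eq_step_matrix: "Mks k s = step_matrix (Suc (k - s))"
  by (simp add: Mks_def step_matrix_def qt_power2) (simp add: qt_def)

lemma Vk1_eq: "Vk1 k = (qt k ^ 2 * (TT ^ 2 - 1), qt k)"
  by (simp add: Vk1_def qt_power2) (simp add: qt_def)

definition vec_mat :: "ps \<times> ps \<Rightarrow> (ps \<times> ps) \<times> (ps \<times> ps) \<Rightarrow> ps \<times> ps" where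
  "vec_mat r M = (fst r * fst (fst M) + snd r * fst (snd M), fst r * snd (fst M) + snd r * snd (snd M))"

definition dot :: "ps \<times> ps \<Rightarrow> ps \<times> ps \<Rightarrow> ps" where
  "dot r v = fst r * fst v + snd r * snd v"

lemma dot_mat_vec: "dot r (mat_vec M v) = dot (vec_mat r M) v"
  by (simp add: dot_def mat_vec_def vec_mat_def algebra_simps)

lemma vec_mat_rowAB:
  "vec_mat (rowA n, rowB n) (step_matrix (Suc n)) = (rowA (Suc n), rowB (Suc n))"
proof -
  have "qt (Suc n) ^ 2 * (TT ^ 2 - 1) + (1 - qt (Suc n)) ^ 2
      = 1 - 2 * qt (Suc n) + qt (Suc n) * (qt (Suc n) * TT ^ 2)"
    by (simp add: algebra_simps power2_eq_square)
  moreover have "qt (Suc n) * (TT ^ 2 - 1) = qt (Suc n) * TT ^ 2 - qt (Suc n)"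
    by (simp add: algebra_simps)
  moreover have "qt (Suc n) ^ 2 * TT ^ 2 = qt (Suc n) * (qt (Suc n) * TT ^ 2)"
    by (simp add: power2_eq_square)
  ultimately show ?thesis
    by (simp add: vec_mat_def step_matrix_def rowA_Suc rowB_Suc qt_Suc_mult_TT mult.commute)
qed

lemma dot_rowAB_Wk:
  "n < k \<Longrightarrow> dot (rowA (k - Suc n), rowB (k - Suc n)) (Wk k n) = dot (rowA (k - 1), rowB (k - 1)) (Vk1 k)"
proof (induction n)
  case (Suc n)
  then have k: "Suc (k - Suc (Suc n)) = k - Suc n"
    by simp
  have "dot (rowA (k - Suc (Suc n)), rowB (k - Suc (Suc n))) (Wk k (Suc n))
      = dot (vec_mat (rowA (k - Suc (Suc n)), rowB (k - Suc (Suc n)))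
          (step_matrix (Suc (k - Suc (Suc n))))) (Wk k n)"
    by (simp add: Mks_eq_step_matrix dot_mat_vec)
  also have "\<dots> = dot (rowA (k - Suc n), rowB (k - Suc n)) (Wk k n)"
    using vec_mat_rowAB[of "k - Suc (Suc n)"] by (simp only: k)
  finally show ?case
    using Suc by simp
qed simp

lemma FF_1: "FF 1 = rowA 1"
  by (simp add: FF_def rowA_def sqbin_def rothe_coeff_Suc[of _ _ 0, simplified] qq_def
      algebra_simps power2_eq_square)

lemma FF_Suc_Suc:
  "FF (Suc (Suc n)) = rowA (Suc (Suc n)) - (1 - qt (Suc (Suc n))) ^ 2 * rowA (Suc n)"
proof -
  let ?x = "qt (Suc (Suc n))"
  have "FF (Suc (Suc n)) = dot (1, 1) (Wk (Suc (Suc n)) (Suc n))"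
    by (simp add: FF_def Vk_def dot_def)
  also have "\<dots> = dot (rowA (Suc n), rowB (Suc n)) (Vk1 (Suc (Suc n)))"
    using dot_rowAB_Wk[of "Suc n" "Suc (Suc n)"] by (simp add: rowA_def rowB_def)
  also have "\<dots> = rowA (Suc n) * (?x ^ 2 * (TT ^ 2 - 1)) + rowB (Suc n) * ?x"
    by (simp add: dot_def Vk1_eq)
  also have "\<dots> = rowA (Suc (Suc n)) - (1 - ?x) ^ 2 * rowA (Suc n)"
    using vec_mat_rowAB[of "Suc n"] by (simp add: vec_mat_def step_matrix_def algebra_simps)
  finally show ?thesis .
qed

section \<open>Telescoping and convergence\<close>

lemma partial_sums_FF:
  "(\<Sum>j<Suc n. FF (Suc j) * recip (qpoch QQ qq (Suc j) ^ 2))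
    = rowA (Suc n) * recip (qpoch QQ qq (Suc n) ^ 2)"
proof (induction n)
  case 0
  show ?case
    using FF_1 by simp
next
  case (Suc n)
  let ?p = "qpoch QQ qq (Suc n) ^ 2" and ?x = "qt (Suc (Suc n))"
  have "recip ?p = (1 - ?x) ^ 2 * recip (?p * (1 - ?x) ^ 2)"
    by (rule recip_mult_right) (simp_all add: qpoch_QQ_nth_0 fps_nth_power_0 qt_Suc)
  also have "?p * (1 - ?x) ^ 2 = qpoch QQ qq (Suc (Suc n)) ^ 2"
    by (simp add: qt_Suc power_mult_distrib)
  finally have recip_p: "recip ?p = (1 - ?x) ^ 2 * recip (qpoch QQ qq (Suc (Suc n)) ^ 2)" .
  have "(\<Sum>j<Suc (Suc n). FF (Suc j) * recip (qpoch QQ qq (Suc j) ^ 2))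
      = rowA (Suc n) * recip ?p + FF (Suc (Suc n)) * recip (qpoch QQ qq (Suc (Suc n)) ^ 2)"
    using Suc by (simp del: qpoch_Suc)
  then show ?case
    unfolding recip_p FF_Suc_Suc by (simp add: algebra_simps)
qed

lemma has_prod_one_minus_qt:
  assumes P: "\<And>n. fps_X ^ Suc n dvd P - qpoch QQ qq n"
  shows "(\<lambda>i. 1 - qt (Suc i)) has_prod P"
  unfolding has_prod_def raw_has_prod_def
proof (intro disjI1 conjI)
  show "P \<noteq> 0"
    using fps_nth_eq_if_X_power_dvd[OF P[of 0]] by (auto simp: qpoch_QQ_nth_0)
  have "(\<Prod>i\<le>n. 1 - qt (Suc (i + 0))) = qpoch QQ qq (Suc n)" for n
    by (induction n) (simp_all add: qt_Suc mult.commute)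
  moreover have "fps_X ^ n dvd qpoch QQ qq (Suc n) - P" for n
  proof -
    have "fps_X ^ n dvd P - qpoch QQ qq (Suc n)"
      using P[of "Suc n"] by (rule power_le_dvd) simp
    then show ?thesis
      by (metis dvd_minus_iff minus_diff_eq)
  qed
  ultimately show "(\<lambda>n. \<Prod>i\<le>n. 1 - qt (Suc (i + 0))) \<longlonglongrightarrow> P"
    by (intro X_adic_tendsto) simp
qed

lemma sums_FF:
  assumes P: "\<And>n. fps_X ^ Suc n dvd P - qpoch QQ qq n"
  shows "(\<lambda>j. FF (Suc j) * recip ((\<Prod>i=1..Suc j. 1 - qt i) ^ 2)) sums recip P"
  unfolding sums_def prod_one_minus_qt
proof (rule X_adic_tendsto[where N = 1])
  fix n :: nat
  assume "1 \<le> n"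
  then obtain m where n: "n = Suc m"
    by (cases n) auto
  have "fps_X ^ Suc n dvd rowA n * recip (qpoch QQ qq n ^ 2) - recip P"
  proof (rule dvd_mult_recip_square_minus_recip)
    show "fps_X ^ Suc n dvd rowA n - qpoch QQ qq n"
      unfolding rowA_def by (rule sum_sqbin_congruent[OF fps_X_dvd_QQ fps_X_dvd_qq])
    show "fps_X ^ Suc n dvd P - qpoch QQ qq n"
      by (rule P)
    show "P $ 0 = 1"
      using fps_nth_eq_if_X_power_dvd[OF P[of 0]] by (simp add: qpoch_QQ_nth_0)
  qed (rule qpoch_QQ_nth_0)
  then show "fps_X ^ n dvd (\<Sum>j<n. FF (Suc j) * recip (qpoch QQ qq (Suc j) ^ 2)) - recip P"
    unfolding n partial_sums_FF by (rule power_le_dvd) simp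
qed

theorem mainTheorem7:
  shows "\<exists>P :: ps.
           (\<lambda>i. 1 - qt (Suc i)) has_prod P \<and>
           (\<lambda>j. FF (Suc j) * recip ((\<Prod>i=1..Suc j. (1 - qt i)) ^ 2)) sums recip P"
proof -
  let ?P = "Abs_fps (\<lambda>i. qpoch QQ qq i $ i)"
  have P: "fps_X ^ Suc n dvd ?P - qpoch QQ qq n" for n
    by (rule X_adic_limit) (rule qpoch_congruent[OF fps_X_dvd_QQ fps_X_dvd_qq])
  show ?thesis
  proof (intro exI conjI)
    show "(\<lambda>i. 1 - qt (Suc i)) has_prod ?P"
      using P by (rule has_prod_one_minus_qt)
    show "(\<lambda>j. FF (Suc j) * recip ((\<Prod>i=1..Suc j. 1 - qt i) ^ 2)) sums recip ?P"
      using P by (rule sums_FF)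
  qed
qed

end
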